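(* For no $a_0,a_3\in\mathbb{C}$ is the third-order recursion $$z_n = \frac{a_3 z_{n-3} + z_{n-1} + a_0}{z_{n-3}}$$ periodic with period $8$, and for no $a_0,a_3\in\mathbb{C}$ is it periodic with period $12$.
   Context: Let $z_1,z_2,z_3$ be independent indeterminates over $\mathbb{C}$ and define $z_n\in\mathbb{C}(z_1,z_2,z_3)$ for $n\ge4$ by the recursion. A third-order recursion is periodic with period $k$ if all iterates are well-defined elements of $\mathbb{C}(z_1,z_2,z_3)$ (no denominator identically zero) and $z_{k+1}=z_1$, $z_{k+2}=z_2$, $z_{k+3}=z_3$. *)

theory Defs
  imports Complex_Main "HOL-Computational_Algebra.Polynomial" "HOL-Computational_Algebra.Fraction_Field"
begin

text \<open>The polynomial ring C[z1,z2,z3] is modelled as nested univariate polynomials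
  (complex poly poly poly); its fraction field is C(z1,z2,z3).\<close>

type_synonym rf3 = "complex poly poly poly fract"

definition zvar1 :: rf3 where "zvar1 = Fract [:[:[:0, 1:]:]:] 1"
definition zvar2 :: rf3 where "zvar2 = Fract [:[:0, 1:]:] 1"
definition zvar3 :: rf3 where "zvar3 = Fract [:0, 1:] 1"
definition rconst :: "complex \<Rightarrow> rf3" where "rconst c = Fract [:[:[:c:]:]:] 1"

text \<open>Iterates of z_n = (a3 z_{n-3} + z_{n-1} + a0) / z_{n-3}; index 0 is a dummy.\<close>
fun zseq :: "complex \<Rightarrow> complex \<Rightarrow> nat \<Rightarrow> rf3" where
  "zseq a0 a3 0 = zvar1"
| "zseq a0 a3 (Suc 0) = zvar1"
| "zseq a0 a3 (Suc (Suc 0)) = zvar2"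
| "zseq a0 a3 (Suc (Suc (Suc 0))) = zvar3"
| "zseq a0 a3 (Suc (Suc (Suc (Suc n)))) =
     (rconst a3 * zseq a0 a3 (Suc n) + zseq a0 a3 (Suc (Suc (Suc n))) + rconst a0)
       / zseq a0 a3 (Suc n)"

definition periodic_rec :: "complex \<Rightarrow> complex \<Rightarrow> nat \<Rightarrow> bool" where
  "periodic_rec a0 a3 k \<longleftrightarrow>
     (\<forall>n\<ge>4. zseq a0 a3 (n - 3) \<noteq> 0) \<and>
     zseq a0 a3 (k + 1) = zseq a0 a3 1 \<and>
     zseq a0 a3 (k + 2) = zseq a0 a3 2 \<and>
     zseq a0 a3 (k + 3) = zseq a0 a3 3"

end

(*
  Periodicity is an identity between rational functions of z1, z2, z3, so it survives
  specialization at any point at which no denominator along the orbit vanishes, even a point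
  with coordinates in a ring of formal power series.

  If (a0, a3) is not (0, -1), the recursion has a fixed point w with w \<noteq> 0.  Specializing at
  the first-order perturbation z_i = w + l^(i-1) \<epsilon> of this fixed point, where l is a root of
  the linearized recursion w l^3 = l^2 + a3 - w, the orbit is z_n = w + l^(n-1) \<epsilon> + O(\<epsilon>^2),
  so a period k forces l^k = 1.  All three roots of the cubic would then lie on the unit circle,
  which for a monic cubic x^3 + b x^2 + c x + d forces b = d * cnj c; here c = 0 but b = -1/w.

  For (a0, a3) = (0, -1) the orbit of (2, 3, 5) is computed explicitly: its terms z_9 and z_13
  differ from z_1 = 2.
*)
theory Submission
  imports Defs "HOL-Computational_Algebra.Formal_Power_Series"
    "HOL-Computational_Algebra.Fundamental_Theorem_Algebra"
begin

unbundle fps_syntax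

locale comm_ring_hom =
  fixes hom :: "'a::comm_ring_1 \<Rightarrow> 'b::comm_ring_1"
  assumes hom_add: "hom (x + y) = hom x + hom y"
    and hom_mult: "hom (x * y) = hom x * hom y"
    and hom_one: "hom 1 = 1"
begin

lemma hom_zero [simp]: "hom 0 = 0"
  using hom_add[of 0 0] by simp

declare hom_one [simp]

end

lemma comm_ring_hom_id: "comm_ring_hom (\<lambda>x. x)"
  by unfold_locales simp_all

lemma comm_ring_hom_fps_const: "comm_ring_hom fps_const"
  by unfold_locales simp_all

definition eval_poly :: "('a::zero \<Rightarrow> 'b::comm_semiring_1) \<Rightarrow> 'a poly \<Rightarrow> 'b \<Rightarrow> 'b" where
  "eval_poly h p x = poly (map_poly h p) x"

lemma eval_poly_0 [simp]: "eval_poly h 0 x = 0"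
  by (simp add: eval_poly_def)

lemma eval_poly_pCons [simp]:
  "h 0 = 0 \<Longrightarrow> eval_poly h (pCons a p) x = h a + x * eval_poly h p x"
  by (simp add: eval_poly_def map_poly_pCons)

lemma eval_poly_1 [simp]: "h 0 = 0 \<Longrightarrow> h 1 = 1 \<Longrightarrow> eval_poly h 1 x = 1"
  by (simp add: one_pCons)

context comm_ring_hom
begin

lemma eval_poly_add: "eval_poly hom (p + q) x = eval_poly hom p x + eval_poly hom q x"
proof -
  have "map_poly hom (p + q) = map_poly hom p + map_poly hom q"
    by (intro poly_eqI) (simp add: coeff_map_poly hom_add)
  then show ?thesis
    by (simp add: eval_poly_def)
qed

lemma eval_poly_mult: "eval_poly hom (p * q) x = eval_poly hom p x * eval_poly hom q x"
proof (induction p)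
  case (pCons a p)
  have "map_poly hom (smult a q) = smult (hom a) (map_poly hom q)"
    by (intro map_poly_smult) (simp_all add: hom_mult)
  then have "eval_poly hom (smult a q) x = hom a * eval_poly hom q x"
    by (simp add: eval_poly_def)
  with pCons show ?case
    by (simp add: eval_poly_add algebra_simps)
qed simp

lemma comm_ring_hom_eval_poly: "comm_ring_hom (\<lambda>p. eval_poly hom p x)"
  by unfold_locales (simp_all add: eval_poly_add eval_poly_mult)

end

definition eval_poly3 ::
    "('a::comm_ring_1 \<Rightarrow> 'b::comm_ring_1) \<Rightarrow> 'b \<Rightarrow> 'b \<Rightarrow> 'b \<Rightarrow> 'a poly poly poly \<Rightarrow> 'b" where
  "eval_poly3 c y1 y2 y3 p = eval_poly (\<lambda>q. eval_poly (\<lambda>r. eval_poly c r y1) q y2) p y3"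

lemma comm_ring_hom_eval_poly3:
  assumes "comm_ring_hom c"
  shows "comm_ring_hom (eval_poly3 c y1 y2 y3)"
proof -
  interpret c1: comm_ring_hom "\<lambda>r. eval_poly c r y1"
    using assms by (rule comm_ring_hom.comm_ring_hom_eval_poly)
  interpret c2: comm_ring_hom "\<lambda>q. eval_poly (\<lambda>r. eval_poly c r y1) q y2"
    by (rule c1.comm_ring_hom_eval_poly)
  show ?thesis
    unfolding eval_poly3_def[abs_def] by (rule c2.comm_ring_hom_eval_poly)
qed

text \<open>Units are written \<open>u dvd 1\<close> rather than \<open>is_unit u\<close>: \<^typ>\<open>complex\<close> is not an
  instance of \<^class>\<open>algebraic_semidom\<close>, where the library develops units.\<close>

lemma dvd_one_prod:
  fixes u v :: "'a::comm_semiring_1"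
  shows "u dvd 1 \<Longrightarrow> v dvd 1 \<Longrightarrow> u * v dvd 1"
  using mult_dvd_mono[of u 1 v 1] by simp

lemma dvd_one_div_mult_self:
  fixes u v :: "'a::idom_divide"
  assumes "u dvd 1"
  shows "v div u * u = v"
proof -
  obtain u' where u': "1 = u * u'"
    using assms by (rule dvdE)
  then have "v = (v * u') * u"
    by (simp add: ac_simps)
  moreover have "u \<noteq> 0"
    using u' by auto
  ultimately show ?thesis
    by (metis nonzero_mult_div_cancel_right)
qed

definition specializes :: "('a::idom \<Rightarrow> 'b::idom_divide) \<Rightarrow> 'a fract \<Rightarrow> 'b \<Rightarrow> bool" where
  "specializes h z v \<longleftrightarrow> (\<exists>a b. z = Fract a b \<and> h b dvd 1 \<and> v * h b = h a)"

abbreviation specializes3 ::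
    "('a::idom \<Rightarrow> 'b::idom_divide) \<Rightarrow> 'a fract \<times> 'a fract \<times> 'a fract \<Rightarrow> 'b \<times> 'b \<times> 'b \<Rightarrow> bool" where
  "specializes3 h \<equiv> rel_prod (specializes h) (rel_prod (specializes h) (specializes h))"

locale idom_hom = comm_ring_hom hom for hom :: "'a::idom \<Rightarrow> 'b::idom_divide"
begin

lemma specializesI:
  "z = Fract a b \<Longrightarrow> hom b dvd 1 \<Longrightarrow> v * hom b = hom a \<Longrightarrow> specializes hom z v"
  unfolding specializes_def by blast

lemma specializesE:
  assumes "specializes hom z v"
  obtains a b where "z = Fract a b" "b \<noteq> 0" "hom b dvd 1" "v * hom b = hom a"
  using assms unfolding specializes_def by fastforce

lemma specializes_unique:
  assumes "specializes hom z v" "specializes hom z v'"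
  shows "v = v'"
proof -
  obtain a b where z: "z = Fract a b" "b \<noteq> 0" "hom b dvd 1" "v * hom b = hom a"
    using assms(1) by (rule specializesE)
  obtain a' b' where z': "z = Fract a' b'" "b' \<noteq> 0" "hom b' dvd 1" "v' * hom b' = hom a'"
    using assms(2) by (rule specializesE)
  have cross: "a * b' = a' * b"
    using z z' by (simp add: eq_fract)
  have "v * (hom b * hom b') = hom (a * b')"
    using z(4) by (simp add: hom_mult mult.assoc)
  also have "\<dots> = hom (a' * b)"
    using cross by simp
  also have "\<dots> = v' * (hom b * hom b')"
    using z'(4) by (simp add: hom_mult algebra_simps)
  finally have "v * (hom b * hom b') = v' * (hom b * hom b')" .
  moreover have "hom b * hom b' \<noteq> 0"
    using z(3) z'(3) dvd_one_prod by fastforce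
  ultimately show ?thesis
    using mult_right_cancel by blast
qed

lemma specializes_Fract_1: "specializes hom (Fract a 1) (hom a)"
  by (rule specializesI[OF refl]) simp_all

lemma specializes_add:
  assumes "specializes hom z v" "specializes hom y u"
  shows "specializes hom (z + y) (v + u)"
proof -
  obtain a b where z: "z = Fract a b" "b \<noteq> 0" "hom b dvd 1" "v * hom b = hom a"
    using assms(1) by (rule specializesE)
  obtain c d where y: "y = Fract c d" "d \<noteq> 0" "hom d dvd 1" "u * hom d = hom c"
    using assms(2) by (rule specializesE)
  have "(v + u) * hom (b * d) = (v * hom b) * hom d + (u * hom d) * hom b"
    by (simp add: hom_mult algebra_simps)
  also have "\<dots> = hom (a * d + c * b)"
    using z y by (simp add: hom_add hom_mult)
  finally show ?thesis
    using z y by (intro specializesI[where a = "a * d + c * b" and b = "b * d"])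
      (simp_all add: hom_mult dvd_one_prod)
qed

lemma specializes_mult:
  assumes "specializes hom z v" "specializes hom y u"
  shows "specializes hom (z * y) (v * u)"
proof -
  obtain a b where z: "z = Fract a b" "b \<noteq> 0" "hom b dvd 1" "v * hom b = hom a"
    using assms(1) by (rule specializesE)
  obtain c d where y: "y = Fract c d" "d \<noteq> 0" "hom d dvd 1" "u * hom d = hom c"
    using assms(2) by (rule specializesE)
  have "(v * u) * hom (b * d) = (v * hom b) * (u * hom d)"
    by (simp add: hom_mult algebra_simps)
  also have "\<dots> = hom (a * c)"
    using z y by (simp add: hom_mult)
  finally show ?thesis
    using z y by (intro specializesI[where a = "a * c" and b = "b * d"])
      (simp_all add: hom_mult dvd_one_prod)
qed

lemma specializes_divide:
  assumes "specializes hom z v" "specializes hom y u" "u dvd 1"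
  shows "specializes hom (z / y) (v div u)"
proof -
  obtain a b where z: "z = Fract a b" "b \<noteq> 0" "hom b dvd 1" "v * hom b = hom a"
    using assms(1) by (rule specializesE)
  obtain c d where y: "y = Fract c d" "d \<noteq> 0" "hom d dvd 1" "u * hom d = hom c"
    using assms(2) by (rule specializesE)
  have "hom c dvd 1"
    using dvd_one_prod[OF assms(3) y(3)] y(4) by simp
  moreover have "(v div u) * u = v"
    using assms(3) by (rule dvd_one_div_mult_self)
  then have "(v div u) * hom (b * c) = hom (a * d)"
    using z(4) y(4) by (metis hom_mult mult.assoc mult.commute)
  ultimately show ?thesis
    using z y by (intro specializesI[where a = "a * d" and b = "b * c"])
      (simp_all add: hom_mult dvd_one_prod)
qed

end

definition rec_step :: "'a::idom_divide \<Rightarrow> 'a \<Rightarrow> 'a \<times> 'a \<times> 'a \<Rightarrow> 'a \<times> 'a \<times> 'a" where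
  "rec_step a0 a3 = (\<lambda>(x, y, z). (y, z, (a3 * x + z + a0) div x))"

lemma rec_step_simp [simp]: "rec_step a0 a3 (x, y, z) = (y, z, (a3 * x + z + a0) div x)"
  by (simp add: rec_step_def)

lemma zseq_eq_iterate:
  "(rec_step (rconst a0) (rconst a3) ^^ n) (zvar1, zvar2, zvar3) =
     (zseq a0 a3 (n + 1), zseq a0 a3 (n + 2), zseq a0 a3 (n + 3))"
  by (induction n) (simp_all add: numeral_eq_Suc)

lemma periodic_rec_iterate:
  assumes "periodic_rec a0 a3 k"
  shows "(rec_step (rconst a0) (rconst a3) ^^ k) (zvar1, zvar2, zvar3) = (zvar1, zvar2, zvar3)"
  using assms by (simp add: periodic_rec_def zseq_eq_iterate numeral_eq_Suc)

context idom_hom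
begin

lemma specializes3_unique: "specializes3 hom u v \<Longrightarrow> specializes3 hom u v' \<Longrightarrow> v = v'"
  by (cases u; cases v; cases v') (auto dest: specializes_unique)

lemma specializes_rec_step:
  assumes "specializes hom a0 b0" "specializes hom a3 b3" "specializes3 hom u v" "fst v dvd 1"
  shows "specializes3 hom (rec_step a0 a3 u) (rec_step b0 b3 v)"
proof -
  obtain x y z x' y' z' where uv: "u = (x, y, z)" "v = (x', y', z')"
    by (cases u, cases v)
  have "specializes hom ((a3 * x + z + a0) div x) ((b3 * x' + z' + b0) div x')"
    using assms uv by (intro specializes_divide specializes_add specializes_mult) simp_all
  then show ?thesis
    using assms(3) uv by simp
qed

lemma specializes_iterate:
  assumes "specializes hom a0 b0" "specializes hom a3 b3" "specializes3 hom u v"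
    and "\<forall>j<n. fst ((rec_step b0 b3 ^^ j) v) dvd 1"
  shows "specializes3 hom ((rec_step a0 a3 ^^ n) u) ((rec_step b0 b3 ^^ n) v)"
  using assms(4)
proof (induction n)
  case (Suc n)
  then show ?case
    using assms(1,2) by (simp add: specializes_rec_step)
qed (simp add: assms(3))

end

lemma periodic_rec_specialization:
  fixes c :: "complex \<Rightarrow> 'b::idom_divide"
  assumes "periodic_rec a0 a3 k" "comm_ring_hom c"
    and "\<forall>j<k. fst ((rec_step (c a0) (c a3) ^^ j) (y1, y2, y3)) dvd 1"
  shows "(rec_step (c a0) (c a3) ^^ k) (y1, y2, y3) = (y1, y2, y3)"
proof -
  let ?h = "eval_poly3 c y1 y2 y3"
  interpret c: comm_ring_hom c
    by (fact assms(2))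
  interpret idom_hom ?h
    using comm_ring_hom_eval_poly3[OF assms(2)] by (simp add: idom_hom_def)
  have const: "specializes ?h (rconst a) (c a)" for a
    using specializes_Fract_1[of "[:[:[:a:]:]:]"] by (simp add: rconst_def eval_poly3_def)
  have start: "specializes3 ?h (zvar1, zvar2, zvar3) (y1, y2, y3)"
    using specializes_Fract_1[of "[:[:[:0, 1:]:]:]"] specializes_Fract_1[of "[:[:0, 1:]:]"]
      specializes_Fract_1[of "[:0, 1:]"]
    by (simp add: zvar1_def zvar2_def zvar3_def eval_poly3_def)
  then have "specializes3 ?h ((rec_step (rconst a0) (rconst a3) ^^ k) (zvar1, zvar2, zvar3))
      ((rec_step (c a0) (c a3) ^^ k) (y1, y2, y3))"
    using assms(3) const by (intro specializes_iterate)
  then have "specializes3 ?h (zvar1, zvar2, zvar3) ((rec_step (c a0) (c a3) ^^ k) (y1, y2, y3))"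
    using assms(1) by (simp add: periodic_rec_iterate)
  then show ?thesis
    using start by (rule specializes3_unique)
qed

lemma monic_cubic_unimodular_roots:
  fixes b c d :: complex
  assumes unimodular: "\<And>x. x ^ 3 + b * x\<^sup>2 + c * x + d = 0 \<Longrightarrow> cmod x = 1"
  shows "b = d * cnj c"
proof -
  define p where "p = [:d, c, b, 1:]"
  have poly_p: "poly p x = x ^ 3 + b * x\<^sup>2 + c * x + d" for x
    by (simp add: p_def algebra_simps power2_eq_square power3_eq_cube)
  obtain r where decompose: "smult (lead_coeff p) (\<Prod>i<degree p. [:- r i, 1:]) = p"
    by (rule complex_poly_decompose')
  have "degree p = 3" "lead_coeff p = 1"
    by (simp_all add: p_def)
  with decompose have factors: "p = (\<Prod>i<3. [:- r i, 1:])"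
    by simp
  have "(\<Prod>i<3. [:- r i, 1:]) =
      [:- (r 0 * r 1 * r 2), r 0 * r 1 + r 0 * r 2 + r 1 * r 2, - (r 0 + r 1 + r 2), 1:]"
    by (simp add: numeral_3_eq_3 numeral_2_eq_2 lessThan_Suc algebra_simps)
  then have vieta: "b = - (r 0 + r 1 + r 2)" "c = r 0 * r 1 + r 0 * r 2 + r 1 * r 2"
      "d = - (r 0 * r 1 * r 2)"
    using factors by (simp_all add: p_def)
  have cnj_r: "cnj (r i) = 1 / r i" "r i \<noteq> 0" if "i < 3" for i
  proof -
    have "poly p (r i) = 0"
      using that by (auto simp: factors poly_prod)
    then have "cmod (r i) = 1"
      using unimodular by (simp add: poly_p)
    then have "r i * cnj (r i) = 1"
      using complex_norm_square[of "r i"] by simp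
    then show "r i \<noteq> 0" "cnj (r i) = 1 / r i"
      by (auto simp: eq_divide_eq mult.commute)
  qed
  have "cnj c = 1 / (r 0 * r 1) + 1 / (r 0 * r 2) + 1 / (r 1 * r 2)"
    using cnj_r(1)[of 0] cnj_r(1)[of 1] cnj_r(1)[of 2] by (simp add: vieta)
  then show ?thesis
    using cnj_r(2)[of 0] cnj_r(2)[of 1] cnj_r(2)[of 2] by (simp add: vieta field_simps)
qed

lemma rec_step_first_order:
  fixes a0 a3 w :: "'a::field" and x z :: "'a fps"
  assumes "w \<noteq> 0" "w * w = (a3 + 1) * w + a0" "x $ 0 = w" "z $ 0 = w"
  defines "q \<equiv> (fps_const a3 * x + z + fps_const a0) div x"
  shows "q $ 0 = w" "w * q $ 1 = (a3 - w) * x $ 1 + z $ 1"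
proof -
  have "q * x = fps_const a3 * x + z + fps_const a0"
    unfolding q_def using assms(1,3) by (intro dvd_one_div_mult_self) simp
  then have "(q * x) $ 0 = w * w" "(q * x) $ 1 = a3 * x $ 1 + z $ 1"
    using assms(2-4) by (simp_all add: algebra_simps)
  then have q0: "q $ 0 * w = w * w" and q1: "q $ 0 * x $ 1 + q $ 1 * w = a3 * x $ 1 + z $ 1"
    using assms(3) by (simp_all add: fps_mult_nth_1)
  from q0 show "q $ 0 = w"
    using assms(1) by simp
  with q1 show "w * q $ 1 = (a3 - w) * x $ 1 + z $ 1"
    by (simp add: algebra_simps)
qed

abbreviation coeffs3 :: "nat \<Rightarrow> 'a fps \<times> 'a fps \<times> 'a fps \<Rightarrow> 'a \<times> 'a \<times> 'a" where
  "coeffs3 k \<equiv> map_prod (\<lambda>f. f $ k) (map_prod (\<lambda>f. f $ k) (\<lambda>f. f $ k))"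

lemma rec_step_iterate_first_order:
  fixes a0 a3 w l :: "'a::field"
  assumes "w \<noteq> 0" "w * w = (a3 + 1) * w + a0" "w * l ^ 3 = l\<^sup>2 + a3 - w"
    and "coeffs3 0 u = (w, w, w)" "coeffs3 1 u = (1, l, l\<^sup>2)"
  shows "coeffs3 0 ((rec_step (fps_const a0) (fps_const a3) ^^ n) u) = (w, w, w) \<and>
    coeffs3 1 ((rec_step (fps_const a0) (fps_const a3) ^^ n) u) = (l ^ n, l ^ (n + 1), l ^ (n + 2))"
proof (induction n)
  case 0
  then show ?case
    using assms(4,5) by (simp add: power2_eq_square)
next
  case (Suc n)
  obtain x y z where xyz: "(rec_step (fps_const a0) (fps_const a3) ^^ n) u = (x, y, z)"
    by (cases "(rec_step (fps_const a0) (fps_const a3) ^^ n) u")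
  let ?q = "(fps_const a3 * x + z + fps_const a0) div x"
  have q: "?q $ 0 = w" "w * ?q $ 1 = (a3 - w) * x $ 1 + z $ 1"
    using rec_step_first_order[OF assms(1,2)] Suc xyz by simp_all
  have "w * ?q $ 1 = (a3 - w) * l ^ n + l ^ (n + 2)"
    using q(2) Suc xyz by simp
  also have "\<dots> = l ^ n * (l\<^sup>2 + a3 - w)"
    by (simp add: power_add algebra_simps power2_eq_square)
  also have "\<dots> = w * l ^ (n + 3)"
    by (simp flip: assms(3) add: power_add)
  finally have "?q $ 1 = l ^ (n + 3)"
    using assms(1) by simp
  with q(1) show ?case
    using Suc xyz by (simp add: numeral_3_eq_3)
qed

lemma periodic_rec_root_of_unity:
  assumes "periodic_rec a0 a3 k" "w \<noteq> 0" "w * w = (a3 + 1) * w + a0"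
    and "w * l ^ 3 = l\<^sup>2 + a3 - w"
  shows "l ^ k = 1"
proof -
  define X where "X i = fps_const w + fps_const (l ^ i) * fps_X" for i :: nat
  let ?T = "rec_step (fps_const a0) (fps_const a3)"
  have orbit: "coeffs3 0 ((?T ^^ n) (X 0, X 1, X 2)) = (w, w, w) \<and>
      coeffs3 1 ((?T ^^ n) (X 0, X 1, X 2)) = (l ^ n, l ^ (n + 1), l ^ (n + 2))" for n
    by (rule rec_step_iterate_first_order[OF assms(2-4)]) (simp_all add: X_def)
  have "fst ((?T ^^ j) (X 0, X 1, X 2)) dvd 1" for j
    using orbit[of j] assms(2) by (cases "(?T ^^ j) (X 0, X 1, X 2)") simp
  then have "(?T ^^ k) (X 0, X 1, X 2) = (X 0, X 1, X 2)"
    using periodic_rec_specialization[OF assms(1) comm_ring_hom_fps_const] by blast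
  then show ?thesis
    using orbit[of k] by (simp add: X_def)
qed

lemma exists_nonzero_quadratic_root:
  fixes b c :: complex
  assumes "b \<noteq> 0 \<or> c \<noteq> 0"
  obtains x where "x \<noteq> 0" "x\<^sup>2 + b * x + c = 0"
proof (cases "c = 0")
  case True
  then show ?thesis
    using assms that[of "- b"] by (simp add: power2_eq_square)
next
  case False
  have "\<not> constant (poly [:c, b, 1:])"
    by (subst constant_degree) simp
  then obtain x where "poly [:c, b, 1:] x = 0"
    using fundamental_theorem_of_algebra by blast
  then have "x\<^sup>2 + b * x + c = 0"
    by (simp add: algebra_simps power2_eq_square)
  with False show ?thesis
    using that[of x] by fastforce
qed

theorem not_periodic_rec_nondegenerate:
  assumes "\<not> (a0 = 0 \<and> a3 = -1)" "k > 0"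
  shows "\<not> periodic_rec a0 a3 k"
proof
  assume periodic: "periodic_rec a0 a3 k"
  have "- (a3 + 1) \<noteq> 0 \<or> - a0 \<noteq> 0"
    using assms(1) by (auto simp: add_eq_0_iff minus_equation_iff)
  then obtain w where "w \<noteq> 0" "w\<^sup>2 + - (a3 + 1) * w + - a0 = 0"
    by (rule exists_nonzero_quadratic_root)
  then have w: "w \<noteq> 0" "w * w = (a3 + 1) * w + a0"
    by (simp_all add: power2_eq_square algebra_simps)
  have "cmod l = 1" if "l ^ 3 + (- 1 / w) * l\<^sup>2 + 0 * l + (1 - a3 / w) = 0" for l
  proof -
    have "w * l ^ 3 - l\<^sup>2 + w - a3 = w * (l ^ 3 + (- 1 / w) * l\<^sup>2 + 0 * l + (1 - a3 / w))"
      using w(1) by (simp add: algebra_simps)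
    also have "\<dots> = 0"
      using that by simp
    finally have "w * l ^ 3 = l\<^sup>2 + a3 - w"
      by (simp add: algebra_simps eq_diff_eq diff_eq_eq)
    then have "l ^ k = 1"
      using periodic_rec_root_of_unity[OF periodic w] by blast
    then show ?thesis
      using power_eq_1_iff assms(2) by blast
  qed
  then have "- 1 / w = (1 - a3 / w) * cnj 0"
    by (rule monic_cubic_unimodular_roots)
  then show False
    using w(1) by simp
qed

lemma degenerate_orbit:
  "fst ((rec_step 0 (-1) ^^ 8) (2, 3, 5 :: complex)) = - 107 / 33"
  "fst ((rec_step 0 (-1) ^^ 12) (2, 3, 5 :: complex)) = - 1892114 / 985791"
  "j < 12 \<Longrightarrow> fst ((rec_step 0 (-1) ^^ j) (2, 3, 5 :: complex)) \<noteq> 0"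
  by (auto simp: numeral_eq_Suc less_Suc_eq)

lemma not_periodic_rec_degenerate:
  assumes "k = 8 \<or> k = 12"
  shows "\<not> periodic_rec 0 (-1) k"
proof
  assume periodic: "periodic_rec 0 (-1) k"
  have "\<forall>j<k. fst ((rec_step 0 (-1) ^^ j) (2, 3, 5 :: complex)) dvd 1"
    using assms degenerate_orbit(3) by (auto simp: dvd_field_iff)
  then have "(rec_step 0 (-1) ^^ k) (2, 3, 5 :: complex) = (2, 3, 5)"
    using periodic_rec_specialization[OF periodic comm_ring_hom_id] by simp
  then show False
    using assms degenerate_orbit(1,2) by (auto simp: field_simps)
qed

theorem mainTheorem7:
  shows "(\<forall>a0 a3 :: complex. \<not> periodic_rec a0 a3 8) \<and>
         (\<forall>a0 a3 :: complex. \<not> periodic_rec a0 a3 12)"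
proof -
  have "\<not> periodic_rec a0 a3 k" if "k = 8 \<or> k = 12" for a0 a3 :: complex and k :: nat
  proof (cases "a0 = 0 \<and> a3 = -1")
    case True
    then show ?thesis
      using not_periodic_rec_degenerate[OF that] by simp
  next
    case False
    then show ?thesis
      using not_periodic_rec_nondegenerate that by auto
  qed
  then show ?thesis
    by blast
qed

end
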